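(* Let $I$ be a set of players, for each $i\in I$ let $G_i$ be a compact convex subset of a Hausdorff locally convex topological vector space, and let $G=(G_i,P_i,Q_i)_{i\in I}$ be a general qualitative game satisfying property $T$, where $P_i,Q_i:\prod_{j\in I}G_j\to 2^{G_i}$ satisfy for each $i\in I$: (i) $y_i\in Q_i(y_i,x_{-i})$ for each $y_i\in G_i$ and each $x_{-i}\in G_{-i}$; (ii) $Q_i$ has convex closed values; (iii) $x_i\notin P_i(x)$ for each $x\in\prod_{j\in I}G_j$; (iv) $P_i$ is upper semicontinuous with closed convex values in $G_i$. Then: (a) if $G\to^* H$ and there exist $i\in I$ and $x_i,y_i\in G_i$ with $y_i\succ_H x_i$, then there exists $x_i^*\in H_i$ such that $x_i^*\succ_H x_i$ and $z_i\not\succ_H x_i^*$ for all $z_i\in G_i$; (b) if $M$ is a nonempty maximal $(\to^* )$-reduction of $G$, then $M$ is the unique maximal $(\to^* )$-reduction of $G$.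
   Context: $I$ is a nonempty set; $X=\prod_{j\in I}G_j$, $G_{-i}=\prod_{j\ne i}G_j$, $x=(x_i,x_{-i})$. A general qualitative game is $G=(G_i,P_i,Q_i)_{i\in I}$ with correspondences $P_i,Q_i:X\to 2^{G_i}$. It satisfies property $T$ if for each $i$ and each $x\in X$: $P_i(x)\subseteq Q_i(x)$, and $y_i\in P_i(x)$ implies $Q_i(y_i,x_{-i})\subseteq P_i(x)$. A pairing of $G$ is a family $H=(H_i)_{i\in I}$ with $H_i\subseteq G_i$ (the $P_i$ restricted to $\prod_jH_j$); $H_{-i}=\prod_{j\ne i}H_j$; $H$ is nonempty if every $H_i\neq\emptyset$. For $x_i,y_i\in G_i$: $y_i\succ_H x_i$ iff $H_{-i}\neq\emptyset$ and $y_i\in P_i(x_i,x_{-i})$ for all $x_{-i}\in H_{-i}$. For pairings $R,S$ with $S_i\subseteq R_i$ for all $i$: $R\to S$ means for every $i$ and $x_i\in R_i\setminus S_i$, $\bigcap_{x_{-i}\in R_{-i}}P_i(x_i,x_{-i})\ne\emptyset$; it is fast if moreover for every $i$ and $x_i\in R_i$, $\bigcap_{x_{-i}\in R_{-i}}P_i(x_i,x_{-i})\neq\emptyset$ implies $x_i\notin S_i$. $G\to^*H$ means there is a finite or countably infinite sequence of pairings $R^0=G,R^1,\dots$ with $R^t\to R^{t+1}$ fast for each $t$ and $H_i=\bigcap_tR^t_i$ for each $i$. $H$ is a maximal $(\to^* )$-reduction of $G$ if $G\to^*H$ and, for pairings $H'$ with $H'_i\subseteq H_i$, $H\to H'$ holds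 only for $H'=H$. *)

theory Defs
  imports "HOL-Analysis.Analysis"
begin

definition lc_tvs :: "'a::{real_vector,t2_space} itself \<Rightarrow> bool" where
  "lc_tvs _ \<longleftrightarrow>
     continuous_on UNIV (\<lambda>p::'a \<times> 'a. fst p + snd p) \<and>
     continuous_on UNIV (\<lambda>p::real \<times> 'a. fst p *\<^sub>R snd p) \<and>
     (\<forall>x::'a. \<forall>U. open U \<and> x \<in> U \<longrightarrow> (\<exists>V. open V \<and> convex V \<and> x \<in> V \<and> V \<subseteq> U))"

text \<open>Strategy profiles: X = PiE I G. The profile (y_i, x_{-i}) is x(i := y).\<close>

definition usc_corr ::
  "'i set \<Rightarrow> ('i \<Rightarrow> 'a::topological_space set) \<Rightarrow> (('i \<Rightarrow> 'a) \<Rightarrow> 'a set) \<Rightarrow> bool" where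
  "usc_corr I G F \<longleftrightarrow>
     (\<forall>x \<in> PiE I G. \<forall>V. open V \<and> F x \<subseteq> V \<longrightarrow>
        (\<exists>U. openin (product_topology (\<lambda>j. subtopology euclidean (G j)) I) U \<and> x \<in> U \<and>
             (\<forall>y \<in> U. F y \<subseteq> V)))"

definition property_T ::
  "'i set \<Rightarrow> ('i \<Rightarrow> 'a set) \<Rightarrow> ('i \<Rightarrow> ('i \<Rightarrow> 'a) \<Rightarrow> 'a set) \<Rightarrow> ('i \<Rightarrow> ('i \<Rightarrow> 'a) \<Rightarrow> 'a set) \<Rightarrow> bool" where
  "property_T I G P Q \<longleftrightarrow>
     (\<forall>i \<in> I. \<forall>x \<in> PiE I G. P i x \<subseteq> Q i x \<and>
        (\<forall>y \<in> P i x. Q i (x(i := y)) \<subseteq> P i x))"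

definition pairing :: "'i set \<Rightarrow> ('i \<Rightarrow> 'a set) \<Rightarrow> ('i \<Rightarrow> 'a set) \<Rightarrow> bool" where
  "pairing I G H \<longleftrightarrow> (\<forall>i \<in> I. H i \<subseteq> G i)"

definition succ_H ::
  "'i set \<Rightarrow> ('i \<Rightarrow> ('i \<Rightarrow> 'a) \<Rightarrow> 'a set) \<Rightarrow> ('i \<Rightarrow> 'a set) \<Rightarrow> 'i \<Rightarrow> 'a \<Rightarrow> 'a \<Rightarrow> bool" where
  "succ_H I P H i y x \<longleftrightarrow>
     PiE (I - {i}) H \<noteq> {} \<and> (\<forall>z \<in> PiE (I - {i}) H. y \<in> P i (z(i := x)))"

definition reduces ::
  "'i set \<Rightarrow> ('i \<Rightarrow> 'a set) \<Rightarrow> ('i \<Rightarrow> ('i \<Rightarrow> 'a) \<Rightarrow> 'a set) \<Rightarrow> ('i \<Rightarrow> 'a set) \<Rightarrow> ('i \<Rightarrow> 'a set) \<Rightarrow> bool" where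
  "reduces I G P R S \<longleftrightarrow>
     pairing I G R \<and> pairing I G S \<and> (\<forall>i \<in> I. S i \<subseteq> R i) \<and>
     (\<forall>i \<in> I. \<forall>x \<in> R i - S i. (\<Inter>z \<in> PiE (I - {i}) R. P i (z(i := x))) \<noteq> {})"

definition fast_reduces ::
  "'i set \<Rightarrow> ('i \<Rightarrow> 'a set) \<Rightarrow> ('i \<Rightarrow> ('i \<Rightarrow> 'a) \<Rightarrow> 'a set) \<Rightarrow> ('i \<Rightarrow> 'a set) \<Rightarrow> ('i \<Rightarrow> 'a set) \<Rightarrow> bool" where
  "fast_reduces I G P R S \<longleftrightarrow>
     reduces I G P R S \<and>
     (\<forall>i \<in> I. \<forall>x \<in> R i. (\<Inter>z \<in> PiE (I - {i}) R. P i (z(i := x))) \<noteq> {} \<longrightarrow> x \<notin> S i)"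

definition reduces_star ::
  "'i set \<Rightarrow> ('i \<Rightarrow> 'a set) \<Rightarrow> ('i \<Rightarrow> ('i \<Rightarrow> 'a) \<Rightarrow> 'a set) \<Rightarrow> ('i \<Rightarrow> 'a set) \<Rightarrow> bool" where
  "reduces_star I G P H \<longleftrightarrow>
     (\<exists>R :: nat \<Rightarrow> 'i \<Rightarrow> 'a set. (\<forall>i \<in> I. R 0 i = G i) \<and>
        ((\<exists>n. (\<forall>t < n. fast_reduces I G P (R t) (R (Suc t))) \<and>
              (\<forall>i \<in> I. H i = (\<Inter>t \<in> {..n}. R t i))) \<or>
         ((\<forall>t. fast_reduces I G P (R t) (R (Suc t))) \<and>
              (\<forall>i \<in> I. H i = (\<Inter>t. R t i)))))"

definition maximal_reduction ::
  "'i set \<Rightarrow> ('i \<Rightarrow> 'a set) \<Rightarrow> ('i \<Rightarrow> ('i \<Rightarrow> 'a) \<Rightarrow> 'a set) \<Rightarrow> ('i \<Rightarrow> 'a set) \<Rightarrow> bool" where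
  "maximal_reduction I G P H \<longleftrightarrow>
     reduces_star I G P H \<and>
     (\<forall>H'. (\<forall>i \<in> I. H' i \<subseteq> H i) \<and> reduces I G P H H' \<longrightarrow> (\<forall>i \<in> I. H' i = H i))"

end

theory Submission
  imports Defs
begin

text \<open>
  (a) Fix the player \<open>i\<close> and write \<open>y \<succ> x\<close> for \<open>y \<succ>\<^sub>H x\<close>. Property T makes \<open>\<succ>\<close> transitive,
  condition (iii) makes it irreflexive, and the closed values of \<open>P\<^sub>i\<close> make every set
  \<open>{y. y \<succ> x}\<close> closed. By compactness of \<open>G\<^sub>i\<close>, every chain above \<open>x\<close> has an upper bound in the
  intersection of the closed sets \<open>{c} \<union> {y. y \<succ> c}\<close>, so Zorn's lemma yields a \<open>\<succ>\<close>-maximal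
  \<open>x\<^sup>* \<succ> x\<close>. This \<open>x\<^sup>*\<close> lies in \<open>H\<^sub>i\<close>: a strategy eliminated along \<open>G \<rightarrow>\<^sup>* H\<close> is dominated, i.e. some single
  strategy is preferred to it against every profile in \<open>H\<^sub>-\<^sub>i\<close>, and that strategy would then be
  above \<open>x\<^sup>*\<close>.

  (b) A maximal reduction contains no dominated strategy, since removing it would be a
  further reduction; and strategies that are undominated within a pairing survive every
  reduction step. Hence any two maximal reductions contain each other.
\<close>

lemma compact_strict_order_has_maximal:
  fixes r :: "'a::t1_space \<Rightarrow> 'a \<Rightarrow> bool"
  assumes K: "compact K"
    and closed_above: "\<And>v. v \<in> K \<Longrightarrow> closed {w. r w v}"
    and above_in: "\<And>v w. v \<in> K \<Longrightarrow> r w v \<Longrightarrow> w \<in> K"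
    and transitive: "\<And>u v w. v \<in> K \<Longrightarrow> r w v \<Longrightarrow> r u w \<Longrightarrow> r u v"
    and irrefl: "\<And>v. v \<in> K \<Longrightarrow> \<not> r v v"
    and x: "x \<in> K" and y: "r y x"
  shows "\<exists>m. r m x \<and> (\<forall>z. \<not> r z m)"
proof -
  define A where "A = {v. r v x}"
  define U where "U v = insert v {w. r w v}" for v
  have A_K: "v \<in> K" if "v \<in> A" for v
    using that above_in x unfolding A_def by blast
  have U_A: "w \<in> A" if "v \<in> A" "w \<in> U v" for v w
    using that transitive x unfolding A_def U_def by blast
  have U_mono: "U w \<subseteq> U v" if "v \<in> K" "w \<in> U v" for v w
    using that transitive unfolding U_def by blast
  have U_antisym: "a = b" if "a \<in> K" "U a = U b" for a b
  proof (rule ccontr)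
    assume "a \<noteq> b"
    moreover have "a \<in> U b" "b \<in> U a" using that(2) unfolding U_def by auto
    ultimately have "r a b" "r b a" unfolding U_def by auto
    then show False using transitive irrefl that(1) by blast
  qed
  have po: "partial_order_on A (relation_of (\<lambda>a b. U b \<subseteq> U a) A)"
    using A_K U_antisym
    unfolding partial_order_on_def preorder_on_def refl_on_def trans_def antisym_def relation_of_def
    by auto
  have "\<exists>m \<in> A. \<forall>a \<in> A. U a \<subseteq> U m \<longrightarrow> a = m"
  proof (rule predicate_Zorn[OF po])
    fix C assume C: "C \<in> Chains (relation_of (\<lambda>a b. U b \<subseteq> U a) A)"
    then have CA: "C \<subseteq> A" by (rule Chains_relation_of)
    have chain: "subset.chain UNIV (U ` C)"
      using C unfolding Chains_def relation_of_def subset_chain_def by auto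
    show "\<exists>u \<in> A. \<forall>a \<in> C. U u \<subseteq> U a"
    proof (cases "C = {}")
      case True
      then show ?thesis using y unfolding A_def by auto
    next
      case False
      have "K \<inter> (\<Inter>c\<in>C. U c) \<noteq> {}"
      proof (rule compact_imp_fip_image[OF K])
        show "closed (U c)" if "c \<in> C" for c
          using that CA A_K unfolding U_def by (blast intro: closed_insert closed_above)
        fix F assume F: "finite F" "F \<subseteq> C"
        show "K \<inter> (\<Inter>c\<in>F. U c) \<noteq> {}"
        proof (cases "F = {}")
          case True
          then show ?thesis using x by auto
        next
          case False
          have "\<Inter>(U ` F) \<in> U ` F"
            using F False chain by (intro Inter_in_chain) (auto simp: subset_chain_def)
          then obtain c where "c \<in> F" "\<Inter>(U ` F) = U c" by blast
          moreover have "c \<in> K" "c \<in> U c" using \<open>c \<in> F\<close> F CA A_K unfolding U_def by auto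
          ultimately show ?thesis by auto
        qed
      qed
      then obtain u where u: "u \<in> K" "\<And>c. c \<in> C \<Longrightarrow> u \<in> U c" by blast
      obtain c where "c \<in> C" using False by blast
      then have "u \<in> A" using u CA U_A by blast
      moreover have "U u \<subseteq> U c" if "c \<in> C" for c
        using that u CA A_K U_mono by blast
      ultimately show ?thesis by blast
    qed
  qed
  then obtain m where m: "m \<in> A" "\<And>a. a \<in> A \<Longrightarrow> U a \<subseteq> U m \<Longrightarrow> a = m" by blast
  have "\<not> r z m" for z
  proof
    assume "r z m"
    then have "z \<in> U m" unfolding U_def by blast
    then have "z = m" using m U_A U_mono A_K by blast
    with \<open>r z m\<close> show False using irrefl A_K m(1) by blast
  qed
  then show ?thesis using m(1) unfolding A_def by blast
qed

definition dominated :: "'i set \<Rightarrow> ('i \<Rightarrow> ('i \<Rightarrow> 'a) \<Rightarrow> 'a set) \<Rightarrow> ('i \<Rightarrow> 'a set) \<Rightarrow> 'i \<Rightarrow> 'a \<Rightarrow> bool"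
  where "dominated I P R i x \<longleftrightarrow> (\<Inter>z \<in> PiE (I - {i}) R. P i (z(i := x))) \<noteq> {}"

lemma reduces_iff_dominated:
  "reduces I G P R S \<longleftrightarrow>
     pairing I G R \<and> pairing I G S \<and> (\<forall>i \<in> I. S i \<subseteq> R i) \<and>
     (\<forall>i \<in> I. \<forall>x \<in> R i - S i. dominated I P R i x)"
  unfolding reduces_def dominated_def by (rule refl)

lemma dominated_antimono:
  assumes "\<And>j. j \<in> I \<Longrightarrow> R j \<subseteq> S j" and "dominated I P S i x"
  shows "dominated I P R i x"
proof -
  have "PiE (I - {i}) R \<subseteq> PiE (I - {i}) S" using assms(1) by (intro PiE_mono) simp
  then have "(\<Inter>z \<in> PiE (I - {i}) S. P i (z(i := x))) \<subseteq> (\<Inter>z \<in> PiE (I - {i}) R. P i (z(i := x)))"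
    by (rule INT_anti_mono) simp
  then show ?thesis using assms(2) unfolding dominated_def by auto
qed

lemma dominated_iff_succ_H:
  assumes "PiE (I - {i}) H \<noteq> {}"
  shows "dominated I P H i x \<longleftrightarrow> (\<exists>w. succ_H I P H i w x)"
  using assms unfolding dominated_def succ_H_def by auto

definition reducing_chain ::
  "'i set \<Rightarrow> ('i \<Rightarrow> 'a set) \<Rightarrow> ('i \<Rightarrow> ('i \<Rightarrow> 'a) \<Rightarrow> 'a set) \<Rightarrow> (nat \<Rightarrow> 'i \<Rightarrow> 'a set) \<Rightarrow> bool"
  where "reducing_chain I G P R \<longleftrightarrow> (\<forall>i \<in> I. R 0 i = G i) \<and> (\<forall>t. reduces I G P (R t) (R (Suc t)))"

lemma reduces_star_imp_reducing_chain:
  assumes "reduces_star I G P H"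
  shows "\<exists>R. reducing_chain I G P R \<and> (\<forall>i \<in> I. H i = (\<Inter>t. R t i))"
proof -
  obtain R :: "nat \<Rightarrow> _" where R0: "\<forall>i \<in> I. R 0 i = G i" and
    cases: "(\<exists>n. (\<forall>t < n. fast_reduces I G P (R t) (R (Suc t))) \<and>
              (\<forall>i \<in> I. H i = (\<Inter>t \<in> {..n}. R t i))) \<or>
         ((\<forall>t. fast_reduces I G P (R t) (R (Suc t))) \<and> (\<forall>i \<in> I. H i = (\<Inter>t. R t i)))"
    using assms unfolding reduces_star_def by blast
  from cases show ?thesis
  proof (elim disjE exE conjE)
    fix n assume red: "\<forall>t < n. fast_reduces I G P (R t) (R (Suc t))"
      and H: "\<forall>i \<in> I. H i = (\<Inter>t \<in> {..n}. R t i)"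
    \<comment> \<open>A finite sequence is continued by repeating its last pairing, which reduces to itself.\<close>
    have "pairing I G (R n)"
    proof (cases n)
      case 0
      then show ?thesis using R0 unfolding pairing_def by simp
    next
      case (Suc m)
      then show ?thesis using red unfolding fast_reduces_def reduces_def by simp
    qed
    then have "reduces I G P (R (min t n)) (R (min (Suc t) n))" for t
      using red unfolding fast_reduces_def by (cases "t < n") (auto simp: reduces_def min_def)
    then have "reducing_chain I G P (\<lambda>t. R (min t n))"
      using R0 unfolding reducing_chain_def by simp
    moreover have "H i = (\<Inter>t. R (min t n) i)" if "i \<in> I" for i
    proof -
      have "range (\<lambda>t. R (min t n) i) = (\<lambda>t. R t i) ` {..n}"
        by (auto simp: image_def min_def intro: exI[of _ n] le_refl)
      then show ?thesis using H that by simp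
    qed
    ultimately show ?thesis by blast
  next
    assume "\<forall>t. fast_reduces I G P (R t) (R (Suc t))" "\<forall>i \<in> I. H i = (\<Inter>t. R t i)"
    then show ?thesis using R0 unfolding reducing_chain_def fast_reduces_def by blast
  qed
qed

lemma reducing_chain_undominated_subset:
  assumes chain: "reducing_chain I G P R"
    and MG: "\<And>j. j \<in> I \<Longrightarrow> M j \<subseteq> G j"
    and undom: "\<And>j x. j \<in> I \<Longrightarrow> x \<in> M j \<Longrightarrow> \<not> dominated I P M j x"
  shows "\<forall>j \<in> I. M j \<subseteq> R t j"
proof (induction t)
  case 0
  then show ?case using chain MG unfolding reducing_chain_def by simp
next
  case (Suc t)
  have "x \<in> R (Suc t) j" if j: "j \<in> I" and x: "x \<in> M j" for j x
  proof (rule ccontr)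
    assume "x \<notin> R (Suc t) j"
    then have "x \<in> R t j - R (Suc t) j" using Suc.IH j x by blast
    moreover have "reduces I G P (R t) (R (Suc t))" using chain unfolding reducing_chain_def by blast
    ultimately have "dominated I P (R t) j x" using j unfolding reduces_iff_dominated by blast
    then have "dominated I P M j x" using Suc.IH j by (intro dominated_antimono[of I M "R t"]) auto
    with undom j x show False by blast
  qed
  then show ?case by blast
qed

lemma reducing_chain_eliminated_dominated:
  assumes chain: "reducing_chain I G P R"
    and HR: "\<And>j t. j \<in> I \<Longrightarrow> H j \<subseteq> R t j"
    and i: "i \<in> I" and x: "x \<in> G i"
  shows "x \<notin> R t i \<Longrightarrow> dominated I P H i x"
proof (induction t)
  case 0
  then show ?case using chain i x unfolding reducing_chain_def by simp
next
  case (Suc t)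
  show ?case
  proof (cases "x \<in> R t i")
    case True
    moreover have "reduces I G P (R t) (R (Suc t))" using chain unfolding reducing_chain_def by blast
    ultimately have "dominated I P (R t) i x" using Suc.prems i unfolding reduces_iff_dominated by blast
    then show ?thesis using HR by (intro dominated_antimono[of I H "R t"]) auto
  qed (use Suc.IH in blast)
qed

lemma reduces_star_subset:
  assumes "reduces_star I G P H" and "i \<in> I"
  shows "H i \<subseteq> G i"
  using reduces_star_imp_reducing_chain[OF assms(1)] assms(2) unfolding reducing_chain_def by blast

lemma undominated_subset_reduces_star:
  assumes "reduces_star I G P H"
    and "\<And>j. j \<in> I \<Longrightarrow> M j \<subseteq> G j"
    and "\<And>j x. j \<in> I \<Longrightarrow> x \<in> M j \<Longrightarrow> \<not> dominated I P M j x"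
    and "i \<in> I"
  shows "M i \<subseteq> H i"
proof -
  obtain R where chain: "reducing_chain I G P R" and H: "\<forall>j \<in> I. H j = (\<Inter>t. R t j)"
    using reduces_star_imp_reducing_chain[OF assms(1)] by blast
  show ?thesis using reducing_chain_undominated_subset[OF chain assms(2,3)] H assms(4) by blast
qed

lemma not_in_reduces_star_dominated:
  assumes "reduces_star I G P H" and "i \<in> I" and "x \<in> G i" and "x \<notin> H i"
  shows "dominated I P H i x"
proof -
  obtain R where chain: "reducing_chain I G P R" and H: "\<forall>j \<in> I. H j = (\<Inter>t. R t j)"
    using reduces_star_imp_reducing_chain[OF assms(1)] by blast
  obtain t where "x \<notin> R t i" using H assms(2,4) by blast
  moreover have "H j \<subseteq> R t j" if "j \<in> I" for j t using H that by blast
  ultimately show ?thesis using reducing_chain_eliminated_dominated[OF chain _ assms(2,3)] by blast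
qed

lemma reduces_star_maximal_successor:
  fixes G :: "'i \<Rightarrow> 'a::t1_space set"
  assumes st: "reduces_star I G P H" and i: "i \<in> I" and x: "x \<in> G i"
    and yx: "succ_H I P H i y x"
    and compact: "compact (G i)"
    and P_into: "\<forall>x \<in> PiE I G. P i x \<subseteq> G i"
    and T: "property_T I G P Q"
    and P_irrefl: "\<forall>x \<in> PiE I G. x i \<notin> P i x"
    and P_closed: "\<forall>x \<in> PiE I G. closed (P i x)"
  shows "\<exists>m \<in> H i. succ_H I P H i m x \<and> (\<forall>z. \<not> succ_H I P H i z m)"
proof -
  define D where "D = PiE (I - {i}) H"
  define succ where "succ = succ_H I P H i"
  have D_ne: "D \<noteq> {}" using yx unfolding succ_H_def D_def by simp
  have succ_iff: "succ w v \<longleftrightarrow> (\<forall>z \<in> D. w \<in> P i (z(i := v)))" for w v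
    using D_ne unfolding succ_def succ_H_def D_def by simp
  have profile: "z(i := v) \<in> PiE I G" if "z \<in> D" "v \<in> G i" for z v
  proof -
    have "D \<subseteq> PiE (I - {i}) G" unfolding D_def using reduces_star_subset[OF st] by (intro PiE_mono) simp
    then have "z(i := v) \<in> PiE (insert i (I - {i})) G" using that by (intro PiE_fun_upd) auto
    then show ?thesis using i by (simp add: insert_absorb)
  qed
  obtain z0 where z0: "z0 \<in> D" using D_ne by blast
  have above_in: "w \<in> G i" if v: "v \<in> G i" and wv: "succ w v" for v w
  proof -
    have "w \<in> P i (z0(i := v))" using wv z0 succ_iff by blast
    then show ?thesis using P_into profile[OF z0 v] by blast
  qed
  have succ_trans: "succ u v" if v: "v \<in> G i" and wv: "succ w v" and uw: "succ u w" for u v w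
    unfolding succ_iff
  proof
    fix z assume z: "z \<in> D"
    have w: "w \<in> G i" using above_in v wv by blast
    have "u \<in> P i (z(i := w))" using uw z succ_iff by blast
    also have "\<dots> \<subseteq> Q i (z(i := w))" using T profile[OF z w] i unfolding property_T_def by blast
    also have "\<dots> \<subseteq> P i (z(i := v))"
    proof -
      have "w \<in> P i (z(i := v))" using wv z succ_iff by blast
      then show ?thesis using T profile[OF z v] i unfolding property_T_def by fastforce
    qed
    finally show "u \<in> P i (z(i := v))" .
  qed
  have succ_irrefl: "\<not> succ v v" if v: "v \<in> G i" for v
  proof
    assume "succ v v"
    then have "v \<in> P i (z0(i := v))" using z0 succ_iff by blast
    then show False using P_irrefl profile[OF z0 v] by fastforce
  qed
  have closed_above: "closed {w. succ w v}" if "v \<in> G i" for v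
  proof -
    have "{w. succ w v} = (\<Inter>z \<in> D. P i (z(i := v)))" using succ_iff by auto
    then show ?thesis using P_closed profile that by (auto intro: closed_INT)
  qed
  have "succ y x" using yx unfolding succ_def .
  with compact closed_above above_in succ_trans succ_irrefl x
  have "\<exists>m. succ m x \<and> (\<forall>z. \<not> succ z m)" by (rule compact_strict_order_has_maximal)
  then obtain m where mx: "succ m x" and m_max: "\<And>z. \<not> succ z m" by blast
  have "m \<in> H i"
  proof (rule ccontr)
    assume "m \<notin> H i"
    then have "dominated I P H i m"
      using not_in_reduces_star_dominated[OF st i above_in[OF x mx]] by blast
    then obtain w where "succ w m" using dominated_iff_succ_H[of I i H P m] D_ne
      unfolding D_def succ_def by blast
    then show False using m_max by blast
  qed
  then show ?thesis using mx m_max unfolding succ_def by blast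
qed

lemma maximal_reduction_undominated:
  assumes max: "maximal_reduction I G P M" and j: "j \<in> I" and x: "x \<in> M j"
  shows "\<not> dominated I P M j x"
proof
  assume dom: "dominated I P M j x"
  define M' where "M' = M(j := M j - {x})"
  have star: "reduces_star I G P M"
    and maximal: "\<And>H'. \<forall>i \<in> I. H' i \<subseteq> M i \<Longrightarrow> reduces I G P M H' \<Longrightarrow> \<forall>i \<in> I. H' i = M i"
    using max unfolding maximal_reduction_def by blast+
  have M'_M: "\<forall>i \<in> I. M' i \<subseteq> M i" unfolding M'_def by simp
  have "pairing I G M" unfolding pairing_def using reduces_star_subset[OF star] by blast
  moreover have "pairing I G M'" using M'_M calculation unfolding pairing_def by blast
  moreover have "\<forall>i \<in> I. \<forall>x' \<in> M i - M' i. dominated I P M i x'"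
    using dom unfolding M'_def by auto
  ultimately have "reduces I G P M M'" using M'_M unfolding reduces_iff_dominated by blast
  then have "M' j = M j" using maximal[OF M'_M] j by blast
  then show False using x unfolding M'_def by auto
qed

lemma maximal_reduction_subset:
  assumes max: "maximal_reduction I G P M" and max': "maximal_reduction I G P M'" and i: "i \<in> I"
  shows "M i \<subseteq> M' i"
proof (rule undominated_subset_reduces_star[OF _ _ _ i])
  show "reduces_star I G P M'" using max' unfolding maximal_reduction_def by (rule conjunct1)
  have "reduces_star I G P M" using max unfolding maximal_reduction_def by (rule conjunct1)
  then show "M j \<subseteq> G j" if "j \<in> I" for j using that by (rule reduces_star_subset)
  show "\<not> dominated I P M j x" if "j \<in> I" "x \<in> M j" for j x
    using max that by (rule maximal_reduction_undominated)
qed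

theorem corollary1:
  fixes I :: "'i set"
    and G :: "'i \<Rightarrow> 'a::{real_vector,t2_space} set"
    and P Q :: "'i \<Rightarrow> ('i \<Rightarrow> 'a) \<Rightarrow> 'a set"
  assumes lctvs: "lc_tvs TYPE('a)"
    and I_ne: "I \<noteq> {}"
    and G_compact: "\<forall>i \<in> I. compact (G i)"
    and G_convex: "\<forall>i \<in> I. convex (G i)"
    and P_into: "\<forall>i \<in> I. \<forall>x \<in> PiE I G. P i x \<subseteq> G i"
    and Q_into: "\<forall>i \<in> I. \<forall>x \<in> PiE I G. Q i x \<subseteq> G i"
    and T: "property_T I G P Q"
    and i_cond: "\<forall>i \<in> I. \<forall>x \<in> PiE I G. \<forall>y \<in> G i. y \<in> Q i (x(i := y))"
    and ii_cond: "\<forall>i \<in> I. \<forall>x \<in> PiE I G. convex (Q i x) \<and> closed (Q i x)"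
    and iii_cond: "\<forall>i \<in> I. \<forall>x \<in> PiE I G. x i \<notin> P i x"
    and iv_usc: "\<forall>i \<in> I. usc_corr I G (P i)"
    and iv_vals: "\<forall>i \<in> I. \<forall>x \<in> PiE I G. closed (P i x) \<and> convex (P i x)"
  shows
    "(\<forall>H i x y. reduces_star I G P H \<and> i \<in> I \<and> x \<in> G i \<and> y \<in> G i \<and> succ_H I P H i y x \<longrightarrow>
        (\<exists>xs \<in> H i. succ_H I P H i xs x \<and> (\<forall>z \<in> G i. \<not> succ_H I P H i z xs)))
     \<and>
     (\<forall>M. maximal_reduction I G P M \<and> (\<forall>i \<in> I. M i \<noteq> {}) \<longrightarrow>
        (\<forall>M'. maximal_reduction I G P M' \<longrightarrow> (\<forall>i \<in> I. M' i = M i)))"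
proof (intro conjI allI impI)
  fix H i x y
  assume "reduces_star I G P H \<and> i \<in> I \<and> x \<in> G i \<and> y \<in> G i \<and> succ_H I P H i y x"
  then have star: "reduces_star I G P H" and i: "i \<in> I" and x: "x \<in> G i"
    and yx: "succ_H I P H i y x"
    by blast+
  have "compact (G i)" using G_compact i by blast
  moreover have "\<forall>x \<in> PiE I G. P i x \<subseteq> G i" using P_into i by blast
  moreover have "\<forall>x \<in> PiE I G. x i \<notin> P i x" using iii_cond i by blast
  moreover have "\<forall>x \<in> PiE I G. closed (P i x)" using iv_vals i by blast
  ultimately have "\<exists>m \<in> H i. succ_H I P H i m x \<and> (\<forall>z. \<not> succ_H I P H i z m)"
    using reduces_star_maximal_successor[OF star i x yx _ _ T] by blast
  then show "\<exists>xs \<in> H i. succ_H I P H i xs x \<and> (\<forall>z \<in> G i. \<not> succ_H I P H i z xs)" by blast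
next
  fix M M'
  assume "maximal_reduction I G P M \<and> (\<forall>i \<in> I. M i \<noteq> {})" and max': "maximal_reduction I G P M'"
  then have max: "maximal_reduction I G P M" by blast
  show "\<forall>i \<in> I. M' i = M i"
    using maximal_reduction_subset[OF max max'] maximal_reduction_subset[OF max' max] by blast
qed

end
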